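(* Let $d\ge1$, let $\kappa:[-1,1]\to\mathbb{R}$ be given by $\kappa(t)=\sum_{q\ge 0}\frac{J_q^2}{q!}t^q$ with $J_q\in\mathbb{R}$, $J_q\neq0$ for infinitely many $q$, $\sum_{q\ge1}\frac{|J_q|}{(q-1)!}<\infty$, and $\kappa(1)=1$; let $\kappa_L$ denote the $L$-fold composition of $\kappa$. Assume $\kappa'(1)\le1$, and if $\kappa'(1)=1$ assume moreover that there exist $c\in\mathbb{R}\setminus\{0\}$ and $\rho>1$ with $1-\kappa(t)=\kappa'(1)(1-t)-c(1-t)^{\rho}+o((1-t)^{\rho})$ as $t\to1^-$. Let $v_L=(\kappa'(1))^{-L}$ and $\mathfrak{g}(t)=\lim_{L\to\infty}(\kappa'(1))^{-L}(1-\kappa_L(t))$ if $\kappa'(1)<1$, and $v_L=L^{1/(\rho-1)}$ and $\mathfrak{g}(t)=\lim_{L\to\infty}L^{1/(\rho-1)}(1-\kappa_L(t))$ if $\kappa'(1)=1$ (these limits exist). Then \[ \lim_{L\to\infty}\frac{\int_{-1}^1 v_L(1-\kappa_L(t))(1-t^2)^{\frac d2-1}\,dt}{\int_{-1}^1(1-t^2)^{\frac d2-1}\,dt}=\frac{\int_{-1}^1\mathfrak{g}(t)(1-t^2)^{\frac d2-1}\,dt}{\int_{-1}^1(1-t^2)^{\frac d2-1}\,dt}. \] *)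

theory Defs
  imports "HOL-Analysis.Analysis" "HOL-Library.Landau_Symbols"
begin

definition kappa :: "(nat \<Rightarrow> real) \<Rightarrow> real \<Rightarrow> real" where
  "kappa J t = (\<Sum>q. (J q)\<^sup>2 / fact q * t ^ q)"

definition wgt :: "nat \<Rightarrow> real \<Rightarrow> real" where
  "wgt d t = (1 - t\<^sup>2) powr (real d / 2 - 1)"

end

theory Submission
  imports Defs
begin

(* kappa is the generating function of the weights a_q = J_q^2/q!, which are nonnegative and
   (because kappa has a nonzero derivative at 1) summable with sum kappa(1) = 1.  Hence kappa maps
   [-1,1] into itself, its chord slope (1 - kappa s)/(1 - s) is monotone in |s|, and
   1 - kappa s <= kappa'(1) (1 - s).  For kappa'(1) < 1 the rescaled defects
   kappa'(1)^-L (1 - kappa_L t) therefore decrease in L and stay below 2.  For kappa'(1) = 1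
   the iterates enter, uniformly in t, a neighbourhood of 1 on which u_(L+1) <= u_L - c u_L^rho / 2
   for u_L = 1 - kappa_L t; then u^(1-rho) grows at least linearly, giving
   u_L = O(L^(-1/(rho-1))) uniformly, and Stolz-Cesaro applied to u^(1-rho) gives the limit.
   In both cases dominated convergence against the integrable weight finishes the proof. *)

section \<open>Sequences decaying like \<open>u - c u\<^sup>\<rho>\<close>\<close>

lemma one_plus_mult_le_powr:
  fixes x \<gamma> :: real
  assumes "0 \<le> x" "x < 1" "0 < \<gamma>"
  shows "1 + \<gamma> * x \<le> (1 - x) powr (-\<gamma>)"
proof -
  have "\<gamma> * ln (1 - x) \<le> \<gamma> * (- x)"
    using ln_le_minus_one[of "1 - x"] assms by (intro mult_left_mono) auto
  then have "\<gamma> * x \<le> - \<gamma> * ln (1 - x)" by simp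
  also have "1 + - \<gamma> * ln (1 - x) \<le> exp (- \<gamma> * ln (1 - x))" by (rule exp_ge_add_one_self)
  finally show ?thesis using assms by (simp add: powr_def)
qed

lemma powr_increment_if_decay_step:
  fixes u u' a \<rho> :: real
  assumes "0 < u'" "0 < u" and step: "u' \<le> u - a * u powr \<rho>" and "0 < a" "1 < \<rho>"
  shows "u powr (1 - \<rho>) + a * (\<rho> - 1) \<le> u' powr (1 - \<rho>)"
proof -
  define x where "x = a * u powr (\<rho> - 1)"
  have "u powr \<rho> = u * u powr (\<rho> - 1)"
    using powr_add[of u 1 "\<rho> - 1"] assms by simp
  then have u': "u' \<le> u * (1 - x)" using step by (simp add: x_def algebra_simps)
  have x: "0 \<le> x" "x < 1"
    using assms u' by (auto simp: x_def) (smt (verit) mult_nonneg_nonpos)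
  have "u powr (1 - \<rho>) + a * (\<rho> - 1) = u powr (1 - \<rho>) * (1 + (\<rho> - 1) * x)"
    using assms by (simp add: x_def algebra_simps powr_add[symmetric])
  also have "\<dots> \<le> u powr (1 - \<rho>) * (1 - x) powr (1 - \<rho>)"
    using one_plus_mult_le_powr[OF x, of "\<rho> - 1"] assms by (intro mult_left_mono) simp_all
  also have "\<dots> = (u * (1 - x)) powr (1 - \<rho>)" by (rule powr_mult[symmetric])
  also have "\<dots> \<le> u' powr (1 - \<rho>)"
    using assms u' by (intro powr_mono2') auto
  finally show ?thesis .
qed

lemma LIMSEQ_div_real_if_increments:
  fixes w :: "nat \<Rightarrow> real"
  assumes increments: "(\<lambda>n. w (Suc n) - w n) \<longlonglongrightarrow> l"
  shows "(\<lambda>n. w n / real n) \<longlonglongrightarrow> l"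
proof (rule LIMSEQ_I)
  fix e :: real
  assume e: "0 < e"
  obtain N where N: "\<And>n. n \<ge> N \<Longrightarrow> \<bar>w (Suc n) - w n - l\<bar> < e / 2"
    using LIMSEQ_D[OF increments, of "e/2"] e by auto
  define A where "A = \<bar>w N - real N * l\<bar>"
  have bound: "\<bar>w n - real n * l\<bar> \<le> A + (real n - real N) * (e / 2)" if "N \<le> n" for n
    using that
  proof (induction n rule: dec_induct)
    case (step n)
    have "\<bar>w (Suc n) - real (Suc n) * l\<bar> \<le> \<bar>w n - real n * l\<bar> + \<bar>w (Suc n) - w n - l\<bar>"
      by (simp add: algebra_simps)
    also have "\<dots> \<le> A + (real n - real N) * (e / 2) + e / 2"
      using step N[of n] by simp
    also have "\<dots> = A + (real (Suc n) - real N) * (e / 2)"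
      by (simp add: field_simps)
    finally show ?case .
  qed (simp add: A_def)
  obtain M :: nat where M: "M > max N (2 * A / e)" by (meson reals_Archimedean2)
  show "\<exists>no. \<forall>n\<ge>no. norm (w n / real n - l) < e"
  proof (intro exI allI impI)
    fix n
    assume "M \<le> n"
    then have n: "N \<le> n" "0 < real n" "2 * A / e < real n" using M by auto
    have "norm (w n / real n - l) = \<bar>w n - real n * l\<bar> / real n"
      using n by (simp add: field_simps abs_divide)
    also have "\<dots> \<le> (A + real n * (e / 2)) / real n"
    proof (intro divide_right_mono)
      have "(real n - real N) * (e / 2) \<le> real n * (e / 2)" using e by (intro mult_right_mono) auto
      then show "\<bar>w n - real n * l\<bar> \<le> A + real n * (e / 2)" using bound[OF n(1)] by linarith
    qed simp
    also have "\<dots> = A / real n + e / 2" using n by (simp add: field_simps)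
    also have "A / real n < e / 2" using n e by (simp add: field_simps)
    finally show "norm (w n / real n - l) < e" by simp
  qed
qed

lemma powr_lower_bound_if_decay:
  fixes u :: "nat \<Rightarrow> real"
  assumes decay: "\<And>n. N \<le> n \<Longrightarrow> u (Suc n) \<le> u n - a * u n powr \<rho>" and "0 < a" "1 < \<rho>"
    and "N \<le> n" "0 < u n"
  shows "real (n - N) * (a * (\<rho> - 1)) \<le> u n powr (1 - \<rho>)"
  using \<open>N \<le> n\<close> \<open>0 < u n\<close>
proof (induction n rule: dec_induct)
  case (step n)
  have "0 < u n" using decay[OF step(1)] step(4) \<open>0 < a\<close>
    by (smt (verit) mult_nonneg_nonneg powr_ge_zero)
  with step have "u n powr (1 - \<rho>) + a * (\<rho> - 1) \<le> u (Suc n) powr (1 - \<rho>)"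
    using decay[OF step(1)] \<open>0 < a\<close> \<open>1 < \<rho>\<close> by (intro powr_increment_if_decay_step) auto
  moreover have "real (Suc n - N) = real (n - N) + 1" using step(1) by (simp add: Suc_diff_le)
  ultimately show ?case using step(3)[OF \<open>0 < u n\<close>] by (simp add: algebra_simps)
qed simp

lemma powr_rate_bound_if_decay_large_index:
  fixes u :: "nat \<Rightarrow> real"
  assumes decay: "\<And>n. N \<le> n \<Longrightarrow> u (Suc n) \<le> u n - a * u n powr \<rho>" and "0 < a" "1 < \<rho>"
    and n: "2 * N \<le> n" "0 < n" and pos: "0 < u n"
  shows "real n powr (1 / (\<rho> - 1)) * u n \<le> (a * (\<rho> - 1) / 2) powr (- (1 / (\<rho> - 1)))"
proof -
  define \<beta> where "\<beta> = 1 / (\<rho> - 1)"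
  have \<beta>: "0 < \<beta>" "(1 - \<rho>) * \<beta> = -1" using \<open>1 < \<rho>\<close> by (auto simp: \<beta>_def field_simps)
  have "N \<le> n" "real n / 2 \<le> real (n - N)" using n by (simp_all add: of_nat_diff)
  then have "real n * (a * (\<rho> - 1) / 2) \<le> real (n - N) * (a * (\<rho> - 1))"
    using \<open>0 < a\<close> \<open>1 < \<rho>\<close> mult_right_mono[of "real n / 2" "real (n - N)" "a * (\<rho> - 1)"]
    by simp
  also have "\<dots> \<le> u n powr (1 - \<rho>)"
    by (rule powr_lower_bound_if_decay[OF decay \<open>0 < a\<close> \<open>1 < \<rho>\<close> \<open>N \<le> n\<close> pos])
  finally have "(u n powr (1 - \<rho>)) powr (- \<beta>) \<le> (real n * (a * (\<rho> - 1) / 2)) powr (- \<beta>)"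
    using n \<open>0 < a\<close> \<open>1 < \<rho>\<close> \<beta> by (intro powr_mono2') auto
  then have "u n \<le> (real n * (a * (\<rho> - 1) / 2)) powr (- \<beta>)"
    using pos by (simp add: powr_powr \<beta>(2))
  also have "\<dots> = real n powr (- \<beta>) * (a * (\<rho> - 1) / 2) powr (- \<beta>)"
    by (rule powr_mult)
  finally have "real n powr \<beta> * u n
      \<le> real n powr \<beta> * (real n powr (- \<beta>) * (a * (\<rho> - 1) / 2) powr (- \<beta>))"
    by (rule mult_left_mono) simp
  also have "\<dots> = (a * (\<rho> - 1) / 2) powr (- \<beta>)" using n by (simp add: powr_minus)
  finally show ?thesis by (simp add: \<beta>_def)
qed

text \<open>The constant depends on \<open>u\<close> only through \<open>B\<close> and \<open>N\<close>, which makes the bound uniform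
  in the starting point of the orbits it is applied to.\<close>
lemma powr_rate_bound_if_decay:
  fixes u :: "nat \<Rightarrow> real"
  assumes nonneg: "\<And>n. 0 \<le> u n" and le_B: "\<And>n. u n \<le> B"
    and decay: "\<And>n. N \<le> n \<Longrightarrow> u (Suc n) \<le> u n - a * u n powr \<rho>" and "0 < a" "1 < \<rho>"
  shows "real n powr (1 / (\<rho> - 1)) * u n
    \<le> max (B * real (2 * N) powr (1 / (\<rho> - 1))) ((a * (\<rho> - 1) / 2) powr (- (1 / (\<rho> - 1))))"
proof -
  define \<beta> where "\<beta> = 1 / (\<rho> - 1)"
  have "0 < \<beta>" using \<open>1 < \<rho>\<close> by (simp add: \<beta>_def)
  consider "u n = 0 \<or> n = 0" | "n < 2 * N" | "0 < u n" "2 * N \<le> n" "0 < n"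
    using nonneg[of n] by fastforce
  then show ?thesis
  proof cases
    case 1
    then show ?thesis by (auto simp: le_max_iff_disj)
  next
    case 2
    then have "real n powr \<beta> \<le> real (2 * N) powr \<beta>"
      using \<open>0 < \<beta>\<close> by (intro powr_mono2) auto
    then have "real n powr \<beta> * u n \<le> real (2 * N) powr \<beta> * B"
      using nonneg[of n] le_B[of n] by (intro mult_mono) auto
    then show ?thesis by (simp add: \<beta>_def mult.commute)
  next
    case 3
    then have "real n powr \<beta> * u n \<le> (a * (\<rho> - 1) / 2) powr (- \<beta>)"
      unfolding \<beta>_def using decay \<open>0 < a\<close> \<open>1 < \<rho>\<close>
      by (intro powr_rate_bound_if_decay_large_index[where N = N and u = u]) auto
    then show ?thesis by (simp add: \<beta>_def)
  qed
qed

lemma one_minus_powr_difference_quotient: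
  fixes \<gamma> :: real
  shows "((\<lambda>y. ((1 - y) powr \<gamma> - 1) / y) \<longlongrightarrow> - \<gamma>) (at 0)"
proof -
  have "((\<lambda>y. (1 - y) powr \<gamma>) has_real_derivative - \<gamma>) (at 0)"
    by (rule derivative_eq_intros refl | simp)+
  then show ?thesis by (simp add: has_field_derivative_iff)
qed

text \<open>With \<open>u\<^bsub>n+1\<^esub> = u\<^sub>n (1 - z\<^sub>n)\<close>, the increment of \<open>u\<^bsup>1-\<rho>\<^esup>\<close> is
  \<open>(c - \<epsilon>\<^sub>n) ((1 - z\<^sub>n)\<^bsup>1-\<rho>\<^esup> - 1) / z\<^sub>n\<close>, a difference quotient of \<open>y \<mapsto> (1 - y)\<^bsup>1-\<rho>\<^esup>\<close>
  at 0 since \<open>z\<^sub>n \<rightarrow> 0\<close>.\<close>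
lemma powr_increments_tendsto_if_decay:
  fixes u E :: "nat \<Rightarrow> real"
  assumes pos: "\<And>n. 0 < u n" and "u \<longlonglongrightarrow> 0"
    and recursion: "\<And>n. u (Suc n) = u n - c * u n powr \<rho> + E n"
    and error: "(\<lambda>n. E n / u n powr \<rho>) \<longlonglongrightarrow> 0" and "0 < c" "1 < \<rho>"
  shows "(\<lambda>n. u (Suc n) powr (1 - \<rho>) - u n powr (1 - \<rho>)) \<longlonglongrightarrow> c * (\<rho> - 1)"
proof -
  define \<epsilon> where "\<epsilon> n = E n / u n powr \<rho>" for n
  define z where "z n = u n powr (\<rho> - 1) * (c - \<epsilon> n)" for n
  have u_powr: "u n powr \<rho> = u n * u n powr (\<rho> - 1)" for n
    using powr_add[of "u n" 1 "\<rho> - 1"] pos[of n] by simp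
  have u_Suc: "u (Suc n) = u n * (1 - z n)" for n
    using pos[of n] by (simp add: recursion u_powr z_def \<epsilon>_def algebra_simps)
  have increment: "u (Suc n) powr (1 - \<rho>) - u n powr (1 - \<rho>)
      = (c - \<epsilon> n) * (((1 - z n) powr (1 - \<rho>) - 1) / z n)"
    if "z n \<noteq> 0" for n
  proof -
    have w_z: "u n powr (1 - \<rho>) * z n = c - \<epsilon> n"
      using pos[of n] by (simp add: z_def powr_add[symmetric])
    have "0 < 1 - z n"
      using pos[of n] pos[of "Suc n"] unfolding u_Suc by (simp add: zero_less_mult_iff)
    then have "u (Suc n) powr (1 - \<rho>) = u n powr (1 - \<rho>) * (1 - z n) powr (1 - \<rho>)"
      using pos[of n] by (simp add: u_Suc powr_mult)
    then have "u (Suc n) powr (1 - \<rho>) - u n powr (1 - \<rho>)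
        = u n powr (1 - \<rho>) * z n * (((1 - z n) powr (1 - \<rho>) - 1) / z n)"
      using that by (simp add: field_simps)
    then show ?thesis by (simp only: w_z)
  qed
  have "(\<lambda>n. u n powr (\<rho> - 1)) \<longlonglongrightarrow> 0"
    using \<open>u \<longlonglongrightarrow> 0\<close> pos \<open>1 < \<rho>\<close>
    by (intro tendsto_zero_powrI tendsto_const always_eventually allI) (auto intro: less_imp_le)
  moreover have "\<epsilon> \<longlonglongrightarrow> 0" using error by (simp add: \<epsilon>_def[abs_def])
  ultimately have "z \<longlonglongrightarrow> 0 * (c - 0)"
    unfolding z_def[abs_def] by (intro tendsto_intros)
  moreover have "\<forall>\<^sub>F n in sequentially. z n \<noteq> 0"
    using order_tendstoD(2)[OF \<open>\<epsilon> \<longlonglongrightarrow> 0\<close> \<open>0 < c\<close>]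
  proof eventually_elim
    case (elim n)
    then show ?case using pos[of n] by (simp add: z_def)
  qed
  ultimately have z: "filterlim z (at 0) sequentially" by (intro filterlim_atI) auto
  have "(\<lambda>n. (c - \<epsilon> n) * (((1 - z n) powr (1 - \<rho>) - 1) / z n)) \<longlonglongrightarrow> (c - 0) * - (1 - \<rho>)"
    by (intro tendsto_intros \<open>\<epsilon> \<longlonglongrightarrow> 0\<close> filterlim_compose[OF one_minus_powr_difference_quotient z])
  then show ?thesis
    using \<open>\<forall>\<^sub>F n in sequentially. z n \<noteq> 0\<close>
    by (simp add: tendsto_cong[OF eventually_mono[OF _ increment]])
qed

lemma powr_rate_tendsto_if_decay:
  fixes u E :: "nat \<Rightarrow> real"
  assumes pos: "\<And>n. 0 < u n" and "u \<longlonglongrightarrow> 0"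
    and "\<And>n. u (Suc n) = u n - c * u n powr \<rho> + E n"
    and "(\<lambda>n. E n / u n powr \<rho>) \<longlonglongrightarrow> 0" and "0 < c" "1 < \<rho>"
  shows "(\<lambda>n. real n powr (1 / (\<rho> - 1)) * u n) \<longlonglongrightarrow> (c * (\<rho> - 1)) powr (- (1 / (\<rho> - 1)))"
proof -
  have "(\<lambda>n. u n powr (1 - \<rho>) / real n) \<longlonglongrightarrow> c * (\<rho> - 1)"
    by (rule LIMSEQ_div_real_if_increments[OF powr_increments_tendsto_if_decay[OF assms]])
  then have "(\<lambda>n. (u n powr (1 - \<rho>) / real n) powr (- (1 / (\<rho> - 1))))
      \<longlonglongrightarrow> (c * (\<rho> - 1)) powr (- (1 / (\<rho> - 1)))"
    using \<open>0 < c\<close> \<open>1 < \<rho>\<close> by (intro tendsto_powr) auto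
  moreover have "(u n powr (1 - \<rho>) / real n) powr (- (1 / (\<rho> - 1))) = real n powr (1 / (\<rho> - 1)) * u n"
    for n
  proof -
    have "(1 - \<rho>) * - (1 / (\<rho> - 1)) = 1" using \<open>1 < \<rho>\<close> by (simp add: field_simps)
    then have "(u n powr (1 - \<rho>)) powr (- (1 / (\<rho> - 1))) = u n"
      using pos[of n] by (simp add: powr_powr)
    then have "(u n powr (1 - \<rho>) / real n) powr (- (1 / (\<rho> - 1)))
        = u n / real n powr (- (1 / (\<rho> - 1)))"
      by (simp add: powr_divide)
    then show ?thesis by (simp add: powr_minus divide_inverse)
  qed
  ultimately show ?thesis by simp
qed

lemma tendsto_zero_if_powr_rate_bounded:
  fixes u :: "nat \<Rightarrow> real"
  assumes nonneg: "\<And>n. 0 \<le> u n" and bounded: "\<And>n. real n powr \<beta> * u n \<le> C" and "0 < \<beta>"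
  shows "u \<longlonglongrightarrow> 0"
proof (rule tendsto_sandwich[OF always_eventually _ tendsto_const])
  show "\<forall>n. 0 \<le> u n" using nonneg by blast
  show "\<forall>\<^sub>F n in sequentially. u n \<le> C * real n powr (- \<beta>)"
    using eventually_gt_at_top[of 0]
  proof eventually_elim
    case (elim n)
    then show ?case using bounded[of n] by (simp add: powr_minus field_simps)
  qed
  have "(\<lambda>n. C * real n powr (- \<beta>)) \<longlonglongrightarrow> C * 0"
    using \<open>0 < \<beta>\<close> by (intro tendsto_intros tendsto_neg_powr filterlim_real_sequentially) simp
  then show "(\<lambda>n. C * real n powr (- \<beta>)) \<longlonglongrightarrow> 0" by simp
qed

section \<open>Probability generating functions and their iterates\<close>

lemma summable_power_series_coeff_bound:
  fixes a :: "nat \<Rightarrow> real"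
  assumes "\<And>q. 0 \<le> a q" "summable a" "\<bar>s\<bar> \<le> 1"
  shows "summable (\<lambda>q. \<bar>a q * s ^ q\<bar>)" and "summable (\<lambda>q. a q * s ^ q)"
proof -
  show "summable (\<lambda>q. \<bar>a q * s ^ q\<bar>)"
    by (rule summable_comparison_test[OF _ assms(2)])
       (use assms in \<open>auto simp: abs_mult power_abs power_le_one mult_left_le\<close>)
  then show "summable (\<lambda>q. a q * s ^ q)" by (rule summable_rabs_cancel)
qed

lemma suminf_eq_if_not_summable:
  "\<not> summable f \<Longrightarrow> \<not> summable g \<Longrightarrow> suminf f = suminf g"
  by (simp add: suminf_def summable_def)

text \<open>Divergence at \<open>t\<close> propagates to \<open>[t, 1]\<close>, where \<open>suminf\<close> then returns one and the
  same junk value.\<close>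
lemma power_series_const_if_not_summable:
  fixes a :: "nat \<Rightarrow> real" and K :: "real \<Rightarrow> real"
  assumes nonneg: "\<And>q. 0 \<le> a q" and K_eq: "\<And>t. K t = (\<Sum>q. a q * t ^ q)"
    and t: "0 < t" "t \<le> 1" and diverges: "\<not> summable (\<lambda>q. a q * t ^ q)" and "t \<le> s"
  shows "K s = K 1"
proof -
  have diverges_above: "\<not> summable (\<lambda>q. a q * s ^ q)" if "t \<le> s" for s
  proof
    assume "summable (\<lambda>q. a q * s ^ q)"
    then have "summable (\<lambda>q. a q * t ^ q)"
      by (rule summable_comparison_test'[where N = 0])
         (use t that nonneg in \<open>auto intro!: mult_left_mono power_mono simp: abs_mult\<close>)
    with diverges show False by contradiction
  qed
  show ?thesis
    unfolding K_eq using diverges_above[OF \<open>t \<le> s\<close>] diverges_above[OF \<open>t \<le> 1\<close>]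
    by (intro suminf_eq_if_not_summable) simp_all
qed

lemma summable_if_deriv_nonzero:
  fixes a :: "nat \<Rightarrow> real" and K :: "real \<Rightarrow> real"
  assumes nonneg: "\<And>q. 0 \<le> a q" and K_eq: "\<And>t. K t = (\<Sum>q. a q * t ^ q)"
    and K_1: "K 1 = 1" and deriv: "(K has_real_derivative k) (at 1 within {-1..1})"
    and "k \<noteq> 0"
  shows "summable a"
proof -
  have quotient: "((\<lambda>y. (K y - K 1) / (y - 1)) \<longlongrightarrow> k) (at_left 1)"
    using deriv unfolding has_field_derivative_iff at_within_Icc_at_left[of "-1::real" 1, simplified] .
  have summable_below_1: "summable (\<lambda>q. a q * t ^ q)" if t: "0 < t" "t < 1" for t
  proof (rule ccontr)
    assume diverges: "\<not> summable (\<lambda>q. a q * t ^ q)"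
    note K_const = power_series_const_if_not_summable[OF nonneg K_eq t(1) less_imp_le[OF t(2)] diverges]
    have "\<forall>\<^sub>F y in at_left 1. y \<in> {t<..<1}"
      by (rule eventually_at_left_real) (use t in auto)
    then have "\<forall>\<^sub>F y in at_left 1. (K y - K 1) / (y - 1) = 0"
    proof eventually_elim
      case (elim y)
      then show ?case using K_const[of y] by simp
    qed
    then have "((\<lambda>y. (K y - K 1) / (y - 1)) \<longlongrightarrow> 0) (at_left 1)" by (rule tendsto_eventually)
    with quotient \<open>k \<noteq> 0\<close> show False using tendsto_unique by force
  qed
  have "continuous (at 1 within {-1..1}) K" by (rule DERIV_continuous[OF deriv])
  then have "(K \<longlongrightarrow> 1) (at_left 1)"
    using K_1 at_within_Icc_at_left[of "-1::real" 1] by (simp add: continuous_within)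
  then have K_lt_2: "\<forall>\<^sub>F t in at_left 1. K t < 2" by (rule order_tendstoD) simp
  have "(\<Sum>q<n. a q) \<le> 2" for n
  proof (rule tendsto_upperbound)
    show "((\<lambda>t. \<Sum>q<n. a q * t ^ q) \<longlongrightarrow> (\<Sum>q<n. a q)) (at_left 1)"
      by (auto intro!: tendsto_eq_intros)
    show "\<forall>\<^sub>F t in at_left 1. (\<Sum>q<n. a q * t ^ q) \<le> 2"
      using K_lt_2 eventually_at_left_real[of 0 1, simplified]
    proof eventually_elim
      case (elim t)
      have "(\<Sum>q<n. a q * t ^ q) \<le> K t"
        unfolding K_eq by (rule sum_le_suminf[OF summable_below_1]) (use elim nonneg in auto)
      then show ?case using elim by simp
    qed
  qed simp
  then show "summable a"
    using bounded_imp_summable[of a 2] nonneg by (metis lessThan_Suc_atMost)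
qed

definition bounded_convergent_continuous_on ::
    "'a::topological_space set \<Rightarrow> (nat \<Rightarrow> 'a \<Rightarrow> real) \<Rightarrow> bool" where
  "bounded_convergent_continuous_on S x \<longleftrightarrow>
     (\<exists>C. \<forall>L. \<forall>t\<in>S. \<bar>x L t\<bar> \<le> C) \<and> (\<forall>t\<in>S. convergent (\<lambda>L. x L t)) \<and>
     (\<forall>L. continuous_on S (x L))"

text \<open>Needed for \<open>\<kappa>'(1) = 0\<close>, where the coefficients need not be summable: the junk value
  \<open>inverse 0 = 0\<close> makes every rescaled defect with \<open>L > 0\<close> vanish.\<close>
lemma bounded_convergent_continuous_on_zero_rate:
  fixes K :: "real \<Rightarrow> real"
  shows "bounded_convergent_continuous_on {-1..1} (\<lambda>L t. inverse (0 ^ L) * (1 - (K ^^ L) t))"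
proof -
  have eq: "(\<lambda>L t. inverse (0 ^ L) * (1 - (K ^^ L) t)) = (\<lambda>L t. if L = 0 then 1 - t else 0)"
    by (auto simp: fun_eq_iff)
  have "(\<lambda>L. if L = 0 then 1 - t else 0) \<longlonglongrightarrow> 0" for t :: real
    by (rule tendsto_eventually) (simp add: eventually_sequentially exI[of _ 1])
  moreover have "continuous_on {-1..1} (\<lambda>t::real. if L = 0 then 1 - t else 0)" for L
    by (cases "L = 0") (auto intro!: continuous_intros)
  ultimately show ?thesis
    unfolding eq bounded_convergent_continuous_on_def
    by (intro conjI exI[of _ 2]) (auto simp: convergent_def)
qed

locale pgf =
  fixes a :: "nat \<Rightarrow> real" and K :: "real \<Rightarrow> real"
  assumes coeff_nonneg: "\<And>q. 0 \<le> a q" and summable_coeff: "summable a"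
    and suminf_coeff: "suminf a = 1" and K_eq: "\<And>t. K t = (\<Sum>q. a q * t ^ q)"
begin

lemma K_1: "K 1 = 1"
  using K_eq suminf_coeff by simp

lemma abs_K_le_1: "s \<in> {-1..1} \<Longrightarrow> \<bar>K s\<bar> \<le> 1"
proof -
  assume "s \<in> {-1..1}"
  then have s: "\<bar>s\<bar> \<le> 1" by auto
  note abs_summable = summable_power_series_coeff_bound(1)[OF coeff_nonneg summable_coeff s]
  have "\<bar>K s\<bar> \<le> (\<Sum>q. \<bar>a q * s ^ q\<bar>)"
    unfolding K_eq by (rule summable_rabs[OF abs_summable])
  also have "\<dots> \<le> suminf a"
    by (rule suminf_le[OF _ abs_summable summable_coeff])
       (use coeff_nonneg s in \<open>simp add: abs_mult power_abs power_le_one mult_left_le\<close>)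
  finally show ?thesis using suminf_coeff by simp
qed

lemma funpow_K_in_Icc:
  assumes "t \<in> {-1..1}"
  shows "(K ^^ n) t \<in> {-1..1}"
proof (induction n)
  case (Suc n)
  with abs_K_le_1[OF Suc] show ?case by (simp add: abs_le_iff)
qed (use assms in simp)

lemma continuous_on_K: "continuous_on {-1..1} K"
proof -
  have "uniform_limit {-1..1} (\<lambda>n x. \<Sum>i<n. a i * x ^ i) (\<lambda>x. \<Sum>i. a i * x ^ i) sequentially"
    by (rule Weierstrass_m_test[OF _ summable_coeff])
       (use coeff_nonneg in \<open>auto simp: abs_mult power_abs power_le_one mult_left_le\<close>)
  moreover have "(\<lambda>x. \<Sum>i. a i * x ^ i) = K" using K_eq by auto
  ultimately have "uniform_limit {-1..1} (\<lambda>n x. \<Sum>i<n. a i * x ^ i) K sequentially" by simp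
  then show ?thesis
    by (rule uniform_limit_theorem[rotated]) (auto intro!: continuous_intros always_eventually)
qed

lemma continuous_on_funpow_K: "continuous_on {-1..1} (K ^^ n)"
proof (induction n)
  case (Suc n)
  have "continuous_on ((K ^^ n) ` {-1..1}) K"
    by (rule continuous_on_subset[OF continuous_on_K]) (auto intro: funpow_K_in_Icc)
  then have "continuous_on {-1..1} (K \<circ> (K ^^ n))" by (rule continuous_on_compose[OF Suc])
  then show ?case by simp
qed simp

lemma one_minus_K_eq: "\<bar>s\<bar> \<le> 1 \<Longrightarrow> 1 - K s = (\<Sum>q. a q * (1 - s ^ q))"
  using suminf_diff[OF summable_coeff summable_power_series_coeff_bound(2)[OF coeff_nonneg summable_coeff]]
  by (simp add: K_eq suminf_coeff algebra_simps)

lemma summable_one_minus_terms: "\<bar>s\<bar> \<le> 1 \<Longrightarrow> summable (\<lambda>q. a q * (1 - s ^ q))"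
  using summable_diff[OF summable_coeff summable_power_series_coeff_bound(2)[OF coeff_nonneg summable_coeff]]
  by (simp add: algebra_simps)

text \<open>The chord slope \<open>(1 - K s) / (1 - s)\<close> is a power series in \<open>s\<close> with nonnegative
  coefficients, hence bounded by its value at \<open>\<bar>s\<bar>\<close> and increasing on \<open>[0, 1)\<close>.\<close>
lemma chord_slope_eq:
  assumes "-1 \<le> s" "s < 1"
  shows "summable (\<lambda>q. a q * (\<Sum>j<q. s ^ j))"
    and "(1 - K s) / (1 - s) = (\<Sum>q. a q * (\<Sum>j<q. s ^ j))"
proof -
  have s: "\<bar>s\<bar> \<le> 1" using assms by auto
  have eq: "a q * (\<Sum>j<q. s ^ j) = inverse (1 - s) * (a q * (1 - s ^ q))" for q
    using assms by (simp add: one_diff_power_eq field_simps)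
  show "summable (\<lambda>q. a q * (\<Sum>j<q. s ^ j))"
    unfolding eq by (rule summable_mult[OF summable_one_minus_terms[OF s]])
  have "(\<Sum>q. a q * (\<Sum>j<q. s ^ j)) = inverse (1 - s) * (\<Sum>q. a q * (1 - s ^ q))"
    unfolding eq by (rule suminf_mult[OF summable_one_minus_terms[OF s]])
  then show "(1 - K s) / (1 - s) = (\<Sum>q. a q * (\<Sum>j<q. s ^ j))"
    using one_minus_K_eq[OF s] by (simp add: field_simps)
qed

lemma chord_slope_mono:
  assumes "-1 \<le> s" "\<bar>s\<bar> \<le> s'" "s' < 1"
  shows "(1 - K s) / (1 - s) \<le> (1 - K s') / (1 - s')"
proof -
  have "s ^ j \<le> s' ^ j" for j
  proof -
    have "s ^ j \<le> \<bar>s\<bar> ^ j" by (metis abs_ge_self power_abs)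
    also have "\<dots> \<le> s' ^ j" by (rule power_mono[OF assms(2)]) simp
    finally show ?thesis .
  qed
  then have termwise: "a q * (\<Sum>j<q. s ^ j) \<le> a q * (\<Sum>j<q. s' ^ j)" for q
    by (intro mult_left_mono sum_mono coeff_nonneg)
  have s: "s < 1" and s': "-1 \<le> s'" using assms by auto
  have "(\<Sum>q. a q * (\<Sum>j<q. s ^ j)) \<le> (\<Sum>q. a q * (\<Sum>j<q. s' ^ j))"
    by (rule suminf_le[OF termwise chord_slope_eq(1)[OF assms(1) s] chord_slope_eq(1)[OF s' assms(3)]])
  then show ?thesis by (simp only: chord_slope_eq(2)[OF assms(1) s] chord_slope_eq(2)[OF s' assms(3)])
qed

lemma one_minus_K_le_twice: "s \<in> {-1..1} \<Longrightarrow> 1 - K s \<le> 2 * (1 - K 0)"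
proof -
  assume "s \<in> {-1..1}"
  then have s: "\<bar>s\<bar> \<le> 1" by auto
  have termwise: "a q * (1 - s ^ q) \<le> 2 * (a q * (1 - 0 ^ q))" for q
  proof (cases q)
    case (Suc m)
    have "\<bar>s ^ q\<bar> \<le> 1" using s by (simp add: power_abs power_le_one)
    then have "a q * (1 - s ^ q) \<le> a q * 2"
      by (intro mult_left_mono coeff_nonneg) linarith
    then show ?thesis using Suc by simp
  qed simp
  have "(\<Sum>q. a q * (1 - s ^ q)) \<le> (\<Sum>q. 2 * (a q * (1 - 0 ^ q)))"
    by (rule suminf_le[OF termwise summable_one_minus_terms[OF s]
          summable_mult[OF summable_one_minus_terms]]) simp
  also have "\<dots> = 2 * (\<Sum>q. a q * (1 - 0 ^ q))"
    by (rule suminf_mult[OF summable_one_minus_terms]) simp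
  finally show ?thesis using one_minus_K_eq[OF s] one_minus_K_eq[of 0] by simp
qed

lemma one_minus_K_le_deriv:
  assumes deriv: "(K has_real_derivative k) (at 1 within {-1..1})" and s: "s \<in> {-1..1}"
  shows "1 - K s \<le> k * (1 - s)"
proof -
  have "((\<lambda>y. (K y - K 1) / (y - 1)) \<longlongrightarrow> k) (at_left 1)"
    using deriv unfolding has_field_derivative_iff at_within_Icc_at_left[of "-1::real" 1, simplified] .
  moreover have "(K y - K 1) / (y - 1) = (1 - K y) / (1 - y)" for y
    using K_1 by (metis minus_diff_eq minus_divide_divide)
  ultimately have quotient: "((\<lambda>y. (1 - K y) / (1 - y)) \<longlongrightarrow> k) (at_left 1)" by simp
  have interior: "1 - K s \<le> k * (1 - s)" if "-1 < s" "s < 1" for s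
  proof -
    have "(1 - K s) / (1 - s) \<le> k"
    proof (rule tendsto_lowerbound[OF quotient])
      have "\<forall>\<^sub>F y in at_left 1. y \<in> {\<bar>s\<bar><..<1}"
        by (rule eventually_at_left_real) (use that in auto)
      then show "\<forall>\<^sub>F y in at_left 1. (1 - K s) / (1 - s) \<le> (1 - K y) / (1 - y)"
        by eventually_elim (use that in \<open>auto intro!: chord_slope_mono\<close>)
    qed simp
    then show ?thesis using that by (simp add: field_simps)
  qed
  have "continuous_on (closure {-1<..<1}) (\<lambda>y. k * (1 - y) - (1 - K y))"
    by (auto intro!: continuous_intros continuous_on_K)
  from continuous_ge_on_closure[OF this, of s 0] show ?thesis
    using s interior by auto
qed

lemma rescaled_one_minus_funpow_K_decseq:
  assumes deriv: "(K has_real_derivative k) (at 1 within {-1..1})" and t: "t \<in> {-1..1}"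
  shows "decseq (\<lambda>L. inverse (k ^ L) * (1 - (K ^^ L) t))"
    and "0 \<le> inverse (k ^ L) * (1 - (K ^^ L) t)"
proof -
  have k: "0 \<le> k" using one_minus_K_le_deriv[OF deriv, of 0] abs_K_le_1[of 0] by auto
  show nonneg: "0 \<le> inverse (k ^ L) * (1 - (K ^^ L) t)" for L
    using funpow_K_in_Icc[OF t, of L] k by simp
  show "decseq (\<lambda>L. inverse (k ^ L) * (1 - (K ^^ L) t))"
  proof (rule decseq_SucI)
    fix L
    show "inverse (k ^ Suc L) * (1 - (K ^^ Suc L) t) \<le> inverse (k ^ L) * (1 - (K ^^ L) t)"
    proof (cases "k = 0")
      case True
      then show ?thesis using nonneg[of L] by simp
    next
      case False
      have "inverse (k ^ Suc L) * (1 - K ((K ^^ L) t))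
          \<le> inverse (k ^ Suc L) * (k * (1 - (K ^^ L) t))"
        by (intro mult_left_mono one_minus_K_le_deriv[OF deriv funpow_K_in_Icc[OF t]]) (use k in simp)
      also have "\<dots> = inverse (k ^ L) * (1 - (K ^^ L) t)" using False by simp
      finally show ?thesis by simp
    qed
  qed
qed

lemma bounded_convergent_continuous_on_subcritical:
  assumes deriv: "(K has_real_derivative k) (at 1 within {-1..1})"
  shows "bounded_convergent_continuous_on {-1..1} (\<lambda>L t. inverse (k ^ L) * (1 - (K ^^ L) t))"
  unfolding bounded_convergent_continuous_on_def
proof (intro conjI exI[of _ 2] allI ballI)
  fix L and t :: real
  assume t: "t \<in> {-1..1}"
  note mono = rescaled_one_minus_funpow_K_decseq[OF deriv t]
  have "inverse (k ^ L) * (1 - (K ^^ L) t) \<le> inverse (k ^ 0) * (1 - (K ^^ 0) t)"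
    by (rule antimonoD[OF mono(1)]) simp
  then show "\<bar>inverse (k ^ L) * (1 - (K ^^ L) t)\<bar> \<le> 2" using mono(2)[of L] t by simp
  show "convergent (\<lambda>L. inverse (k ^ L) * (1 - (K ^^ L) t))"
    using decseq_convergent[OF mono(1), of 0] mono(2) unfolding convergent_def by metis
next
  fix L
  show "continuous_on {-1..1} (\<lambda>t. inverse (k ^ L) * (1 - (K ^^ L) t))"
    by (intro continuous_intros continuous_on_funpow_K)
qed

text \<open>Until the orbit reaches \<open>[ss, 1]\<close> it stays (after one step, by \<open>one_minus_K_le_twice\<close>)
  in \<open>[-ss, ss]\<close>, where the chord slope is at most its value at \<open>ss\<close>.\<close>
lemma one_minus_funpow_K_le_geometric:
  assumes le: "\<And>s. s \<in> {-1..1} \<Longrightarrow> s \<le> K s"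
    and ss: "0 \<le> ss" "ss < 1" "1 - 2 * K 0 \<le> ss" and t: "t \<in> {-1..1}" and n: "1 \<le> n"
  shows "1 - (K ^^ n) t \<le> max (1 - ss) (2 * ((1 - K ss) / (1 - ss)) ^ (n - 1))"
  using n
proof (induction n rule: dec_induct)
  case base
  show ?case using funpow_K_in_Icc[OF t, of 1] by (simp add: le_max_iff_disj)
next
  case (step n)
  define s where "s = (K ^^ n) t"
  define \<theta> where "\<theta> = (1 - K ss) / (1 - ss)"
  have s: "s \<in> {-1..1}" unfolding s_def by (rule funpow_K_in_Icc[OF t])
  show ?case
  proof (cases "1 - s \<le> 1 - ss")
    case True
    then show ?thesis using le[OF s] by (simp add: s_def)
  next
    case False
    have "\<theta> \<ge> 0" using abs_K_le_1[of ss] ss by (simp add: \<theta>_def abs_le_iff)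
    obtain m where m: "n = Suc m" using step(1) by (cases n) auto
    have "1 - s \<le> 2 * (1 - K 0)"
      using one_minus_K_le_twice[OF funpow_K_in_Icc[OF t, of m]] by (simp add: s_def m)
    then have "(1 - K s) / (1 - s) \<le> \<theta>"
      unfolding \<theta>_def using False ss s by (intro chord_slope_mono) auto
    then have "1 - K s \<le> \<theta> * (1 - s)" using False ss by (simp add: field_simps)
    also have "\<dots> \<le> \<theta> * (2 * \<theta> ^ (n - 1))"
      using step(3) False \<open>\<theta> \<ge> 0\<close> by (intro mult_left_mono) (simp_all add: s_def \<theta>_def)
    also have "\<dots> = 2 * \<theta> ^ (Suc n - 1)" using m by simp
    finally show ?thesis by (simp add: s_def \<theta>_def)
  qed
qed

lemma funpow_K_uniformly_ge:
  assumes le: "\<And>s. s \<in> {-1..1} \<Longrightarrow> s \<le> K s"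
    and gt: "\<And>s. s \<in> {s0<..<1} \<Longrightarrow> s < K s" and "s0 < 1" and "b < 1"
  shows "\<exists>N. \<forall>n\<ge>N. \<forall>t\<in>{-1..1}. b \<le> (K ^^ n) t"
proof -
  define s1 where "s1 = (1 + max s0 0) / 2"
  have s1: "s0 < s1" "0 \<le> s1" "s1 < 1" using \<open>s0 < 1\<close> by (auto simp: s1_def)
  have "1 - K 0 \<le> (1 - K s1) / (1 - s1)" using chord_slope_mono[of 0 s1] s1 by simp
  also have "\<dots> < 1" using gt[of s1] s1 by simp
  finally have "0 < K 0" by simp
  define ss where "ss = max (max b s1) (1 - 2 * K 0)"
  have ss: "0 \<le> ss" "ss < 1" "1 - 2 * K 0 \<le> ss" "b \<le> ss" "s0 < ss"
    using s1 \<open>b < 1\<close> \<open>0 < K 0\<close> by (auto simp: ss_def)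
  define \<theta> where "\<theta> = (1 - K ss) / (1 - ss)"
  have \<theta>: "0 \<le> \<theta>" "\<theta> < 1"
    using abs_K_le_1[of ss] gt[of ss] ss by (auto simp: \<theta>_def abs_le_iff)
  have "(\<lambda>n. 2 * \<theta> ^ n) \<longlonglongrightarrow> 2 * 0"
    by (intro tendsto_intros LIMSEQ_power_zero) (use \<theta> in simp)
  then have "\<forall>\<^sub>F n in sequentially. 2 * \<theta> ^ n < 1 - ss"
    by (rule order_tendstoD(2)) (use ss in simp)
  then obtain m where m: "2 * \<theta> ^ m < 1 - ss"
    unfolding eventually_sequentially by (meson order_refl)
  show ?thesis
  proof (intro exI[of _ "Suc m"] allI impI ballI)
    fix n and t :: real
    assume n: "Suc m \<le> n" and t: "t \<in> {-1..1}"
    have "2 * \<theta> ^ (n - 1) \<le> 2 * \<theta> ^ m" using n \<theta> by (simp add: power_decreasing)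
    then have "1 - (K ^^ n) t \<le> 1 - ss"
      using one_minus_funpow_K_le_geometric[OF le ss(1-3) t, of n] m n by (simp add: \<theta>_def)
    then show "b \<le> (K ^^ n) t" using ss(4) by simp
  qed
qed

end

section \<open>The critical case\<close>

locale critical_pgf = pgf +
  fixes c \<rho> :: real
  assumes deriv_1: "(K has_real_derivative 1) (at 1 within {-1..1})"
    and c_nonzero: "c \<noteq> 0" and rho_gt_1: "1 < \<rho>"
    and expansion: "(\<lambda>t. (1 - K t) - ((1 - t) - c * (1 - t) powr \<rho>)) \<in> o[at_left 1](\<lambda>t. (1 - t) powr \<rho>)"
begin

definition remainder :: "real \<Rightarrow> real" where
  "remainder t = (1 - K t) - ((1 - t) - c * (1 - t) powr \<rho>)"

lemma le_K: "s \<in> {-1..1} \<Longrightarrow> s \<le> K s"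
  using one_minus_K_le_deriv[OF deriv_1] by force

lemma remainder_le: "\<exists>b<1. \<forall>y\<in>{b<..<1}. \<bar>remainder y\<bar> \<le> \<bar>c\<bar> / 2 * (1 - y) powr \<rho>"
proof -
  have "\<forall>\<^sub>F y in at_left 1. \<bar>remainder y\<bar> \<le> \<bar>c\<bar> / 2 * (1 - y) powr \<rho>"
    using landau_o.smallD[OF expansion[folded remainder_def[abs_def]], of "\<bar>c\<bar> / 2"] c_nonzero
    by simp
  then obtain b where "b < 1" "\<And>y. b < y \<Longrightarrow> y < 1 \<Longrightarrow> \<bar>remainder y\<bar> \<le> \<bar>c\<bar> / 2 * (1 - y) powr \<rho>"
    unfolding eventually_at_left[of 0 "1::real", simplified] by auto
  then show ?thesis by auto
qed

text \<open>Since \<open>K s \<ge> s\<close>, the correction \<open>c (1 - s)\<^sup>\<rho>\<close> cannot be negative.\<close>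
lemma c_pos: "0 < c"
proof -
  obtain b where "b < 1" and b: "\<forall>y\<in>{b<..<1}. \<bar>remainder y\<bar> \<le> \<bar>c\<bar> / 2 * (1 - y) powr \<rho>"
    using remainder_le by blast
  define y where "y = (1 + max b 0) / 2"
  have y: "y \<in> {b<..<1}" "y \<in> {-1..1}" using \<open>b < 1\<close> by (auto simp: y_def)
  have "- remainder y \<le> \<bar>c\<bar> / 2 * (1 - y) powr \<rho>" using b y by fastforce
  moreover have "remainder y \<le> c * (1 - y) powr \<rho>" using le_K[OF y(2)] by (simp add: remainder_def)
  ultimately have "0 \<le> (c + \<bar>c\<bar> / 2) * (1 - y) powr \<rho>" by (simp add: algebra_simps)
  then have "0 \<le> c + \<bar>c\<bar> / 2" using y by (simp add: zero_le_mult_iff)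
  then show ?thesis using c_nonzero by linarith
qed

lemma decay_near_1: "\<exists>b<1. \<forall>y\<in>{b..1}. 1 - K y \<le> (1 - y) - c / 2 * (1 - y) powr \<rho>"
proof -
  obtain b where "b < 1" and b: "\<forall>y\<in>{b<..<1}. \<bar>remainder y\<bar> \<le> \<bar>c\<bar> / 2 * (1 - y) powr \<rho>"
    using remainder_le by blast
  have "1 - K y \<le> (1 - y) - c / 2 * (1 - y) powr \<rho>" if "y \<in> {(1 + b) / 2..1}" for y
  proof (cases "y = 1")
    case False
    then have "y \<in> {b<..<1}" using that \<open>b < 1\<close> by auto
    then have "remainder y \<le> c / 2 * (1 - y) powr \<rho>"
      using b abs_of_pos[OF c_pos] by fastforce
    then show ?thesis by (simp add: remainder_def)
  qed (simp add: K_1)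
  moreover have "(1 + b) / 2 < 1" using \<open>b < 1\<close> by simp
  ultimately show ?thesis by blast
qed

lemma funpow_K_uniform_decay:
  "\<exists>N. \<forall>n\<ge>N. \<forall>t\<in>{-1..1}.
     1 - (K ^^ Suc n) t \<le> (1 - (K ^^ n) t) - c / 2 * (1 - (K ^^ n) t) powr \<rho>"
proof -
  obtain b where "b < 1" and decay: "\<forall>y\<in>{b..1}. 1 - K y \<le> (1 - y) - c / 2 * (1 - y) powr \<rho>"
    using decay_near_1 by blast
  have "s < K s" if "s \<in> {b<..<1}" for s
  proof -
    have "1 - K s \<le> (1 - s) - c / 2 * (1 - s) powr \<rho>" using decay that by auto
    moreover have "0 < c / 2 * (1 - s) powr \<rho>" using that c_pos by simp
    ultimately show ?thesis by simp
  qed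
  then obtain N where N: "\<forall>n\<ge>N. \<forall>t\<in>{-1..1}. b \<le> (K ^^ n) t"
    using funpow_K_uniformly_ge[OF le_K _ \<open>b < 1\<close> \<open>b < 1\<close>] by blast
  show ?thesis
  proof (intro exI[of _ N] allI impI ballI)
    fix n and t :: real
    assume "N \<le> n" "t \<in> {-1..1}"
    then have "(K ^^ n) t \<in> {b..1}" using N funpow_K_in_Icc by fastforce
    then show "1 - (K ^^ Suc n) t \<le> (1 - (K ^^ n) t) - c / 2 * (1 - (K ^^ n) t) powr \<rho>"
      using decay by simp
  qed
qed

lemma rescaled_one_minus_funpow_K_bounded:
  "\<exists>C. \<forall>n. \<forall>t\<in>{-1..1}. \<bar>real n powr (1 / (\<rho> - 1)) * (1 - (K ^^ n) t)\<bar> \<le> C"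
proof -
  obtain N where N: "\<forall>n\<ge>N. \<forall>t\<in>{-1..1}.
      1 - (K ^^ Suc n) t \<le> (1 - (K ^^ n) t) - c / 2 * (1 - (K ^^ n) t) powr \<rho>"
    using funpow_K_uniform_decay by blast
  have "\<bar>real n powr (1 / (\<rho> - 1)) * (1 - (K ^^ n) t)\<bar>
      \<le> max (2 * real (2 * N) powr (1 / (\<rho> - 1))) ((c / 2 * (\<rho> - 1) / 2) powr (- (1 / (\<rho> - 1))))"
    if t: "t \<in> {-1..1}" for n t
  proof -
    have "real n powr (1 / (\<rho> - 1)) * (1 - (K ^^ n) t)
      \<le> max (2 * real (2 * N) powr (1 / (\<rho> - 1))) ((c / 2 * (\<rho> - 1) / 2) powr (- (1 / (\<rho> - 1))))"
      using N t funpow_K_in_Icc[OF t] c_pos rho_gt_1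
      by (intro powr_rate_bound_if_decay[where u = "\<lambda>n. 1 - (K ^^ n) t"]) auto
    then show ?thesis using funpow_K_in_Icc[OF t, of n] by simp
  qed
  then show ?thesis by blast
qed

lemma rescaled_one_minus_funpow_K_convergent:
  assumes t: "t \<in> {-1..1}"
  shows "convergent (\<lambda>n. real n powr (1 / (\<rho> - 1)) * (1 - (K ^^ n) t))"
proof -
  define u where "u n = 1 - (K ^^ n) t" for n
  have u_nonneg: "0 \<le> u n" for n using funpow_K_in_Icc[OF t] by (simp add: u_def)
  have u_decseq: "decseq u"
    by (rule decseq_SucI) (use le_K[OF funpow_K_in_Icc[OF t]] in \<open>simp add: u_def\<close>)
  show ?thesis
  proof (cases "\<exists>N. u N = 0")
    case True
    then obtain N where "u N = 0" by blast
    then have "\<forall>\<^sub>F n in sequentially. real n powr (1 / (\<rho> - 1)) * u n = 0"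
      using u_nonneg antimonoD[OF u_decseq] unfolding eventually_sequentially by (metis antisym mult_zero_right)
    then have "(\<lambda>n. real n powr (1 / (\<rho> - 1)) * u n) \<longlonglongrightarrow> 0" by (rule tendsto_eventually)
    then show ?thesis by (auto simp: convergent_def u_def)
  next
    case False
    then have u_pos: "0 < u n" for n using u_nonneg[of n] by (simp add: order_le_less)
    obtain C where "\<forall>n. \<forall>t\<in>{-1..1}. \<bar>real n powr (1 / (\<rho> - 1)) * (1 - (K ^^ n) t)\<bar> \<le> C"
      using rescaled_one_minus_funpow_K_bounded by blast
    then have "real n powr (1 / (\<rho> - 1)) * u n \<le> C" for n
      using t unfolding u_def by (meson abs_le_D1)
    then have "u \<longlonglongrightarrow> 0"
      using u_nonneg rho_gt_1 by (intro tendsto_zero_if_powr_rate_bounded) auto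
    then have "(\<lambda>n. (K ^^ n) t) \<longlonglongrightarrow> 1"
      using tendsto_diff[OF tendsto_const[of 1] \<open>u \<longlonglongrightarrow> 0\<close>] by (simp add: u_def)
    then have "filterlim (\<lambda>n. (K ^^ n) t) (at_left 1) sequentially"
      by (rule tendsto_imp_filterlim_at_left[OF _ always_eventually]) (use u_pos in \<open>simp add: u_def\<close>)
    then have error: "(\<lambda>n. remainder ((K ^^ n) t) / u n powr \<rho>) \<longlonglongrightarrow> 0"
      unfolding u_def
      by (rule filterlim_compose[OF smalloD_tendsto[OF expansion[folded remainder_def[abs_def]]]])
    have "(\<lambda>n. real n powr (1 / (\<rho> - 1)) * u n) \<longlonglongrightarrow> (c * (\<rho> - 1)) powr (- (1 / (\<rho> - 1)))"
      by (rule powr_rate_tendsto_if_decay[OF u_pos \<open>u \<longlonglongrightarrow> 0\<close> _ error c_pos rho_gt_1])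
         (simp add: u_def remainder_def)
    then show ?thesis by (auto simp: u_def convergent_def)
  qed
qed

lemma bounded_convergent_continuous_on_critical:
  "bounded_convergent_continuous_on {-1..1} (\<lambda>L t. real L powr (1 / (\<rho> - 1)) * (1 - (K ^^ L) t))"
  unfolding bounded_convergent_continuous_on_def
  using rescaled_one_minus_funpow_K_bounded rescaled_one_minus_funpow_K_convergent
  by (auto intro!: continuous_intros continuous_on_funpow_K)

end

lemma bounded_convergent_continuous_on_rescaled_iterates:
  fixes a :: "nat \<Rightarrow> real" and K :: "real \<Rightarrow> real" and k c \<rho> :: real
  assumes nonneg: "\<And>q. 0 \<le> a q" and K_eq: "\<And>t. K t = (\<Sum>q. a q * t ^ q)" and K_1: "K 1 = 1"
    and deriv: "(K has_real_derivative k) (at 1 within {-1..1})" and "k \<le> 1"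
    and critical: "k = 1 \<Longrightarrow> c \<noteq> 0 \<and> \<rho> > 1 \<and>
       (\<lambda>t. (1 - K t) - (k * (1 - t) - c * (1 - t) powr \<rho>)) \<in> o[at_left 1](\<lambda>t. (1 - t) powr \<rho>)"
  shows "bounded_convergent_continuous_on {-1..1}
    (\<lambda>L t. (if k < 1 then inverse (k ^ L) else real L powr (1 / (\<rho> - 1))) * (1 - (K ^^ L) t))"
proof (cases "k = 0")
  case True
  then show ?thesis using bounded_convergent_continuous_on_zero_rate[of K] by simp
next
  case False
  interpret pgf a K
    using nonneg K_eq K_1 summable_if_deriv_nonzero[OF nonneg K_eq K_1 deriv False]
    by unfold_locales auto
  show ?thesis
  proof (cases "k < 1")
    case True
    then show ?thesis using bounded_convergent_continuous_on_subcritical[OF deriv] by simp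
  next
    case False
    with \<open>k \<le> 1\<close> have "k = 1" by simp
    with critical deriv interpret critical_pgf a K c \<rho> by unfold_locales auto
    show ?thesis using bounded_convergent_continuous_on_critical False by simp
  qed
qed

section \<open>Integration against the weight\<close>

lemma wgt_nonneg: "0 \<le> wgt d t"
  by (simp add: wgt_def)

lemma wgt_measurable: "wgt d \<in> borel_measurable (lebesgue_on S)"
proof -
  have "wgt d \<in> borel_measurable borel" unfolding wgt_def by measurable
  then show ?thesis by (intro measurable_restrict_space1 measurable_completion) simp
qed

text \<open>For \<open>d = 1\<close> the weight \<open>(1 - t\<^sup>2)\<^bsup>-1/2\<^esup>\<close> is unbounded; it is the derivative of \<open>arcsin\<close>.\<close>
lemma wgt_integrable:
  assumes "1 \<le> d"
  shows "wgt d integrable_on {-1..1}"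
proof (cases "d = 1")
  case True
  have "(wgt 1 has_integral (arcsin 1 - arcsin (-1))) {-1..1}"
  proof (rule fundamental_theorem_of_calculus_interior)
    fix x :: real
    assume x: "x \<in> {-1<..<1}"
    then have "0 < 1 - x\<^sup>2" by (simp add: abs_square_less_1 abs_less_iff)
    then have "inverse (sqrt (1 - x\<^sup>2)) = wgt 1 x"
      by (simp add: wgt_def powr_minus powr_half_sqrt)
    moreover have "(arcsin has_real_derivative inverse (sqrt (1 - x\<^sup>2))) (at x)"
      by (rule DERIV_arcsin) (use x in auto)
    ultimately show "(arcsin has_vector_derivative wgt 1 x) (at x)"
      by (simp add: has_real_derivative_iff_has_vector_derivative)
  qed (simp_all add: continuous_on_arcsin')
  then show ?thesis using True by blast
next
  case False
  show ?thesis
  proof (rule measurable_bounded_by_integrable_imp_integrable[OF wgt_measurable])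
    show "(\<lambda>x::real. 1::real) integrable_on {-1..1}" by (rule integrable_const_ivl)
    fix x :: real
    assume "x \<in> {-1..1}"
    then have "x\<^sup>2 \<le> 1" by (simp add: abs_square_le_1 abs_le_iff)
    then show "norm (wgt d x) \<le> 1"
      using False assms by (simp add: wgt_def powr_le1)
  qed simp
qed

lemma integral_tendsto_if_bounded_convergent_continuous:
  fixes S :: "'a::euclidean_space set" and w :: "'a \<Rightarrow> real"
  assumes S: "S \<in> sets lebesgue" and w: "w integrable_on S" "w \<in> borel_measurable (lebesgue_on S)"
    and w_nonneg: "\<And>t. t \<in> S \<Longrightarrow> 0 \<le> w t" and x: "bounded_convergent_continuous_on S x"
  shows "(\<lambda>t. lim (\<lambda>L. x L t) * w t) integrable_on S"
    and "(\<lambda>L. integral S (\<lambda>t. x L t * w t)) \<longlonglongrightarrow> integral S (\<lambda>t. lim (\<lambda>L. x L t) * w t)"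
proof -
  obtain C where C: "\<And>L t. t \<in> S \<Longrightarrow> \<bar>x L t\<bar> \<le> C"
    and conv: "\<And>t. t \<in> S \<Longrightarrow> convergent (\<lambda>L. x L t)" and cont: "\<And>L. continuous_on S (x L)"
    using x unfolding bounded_convergent_continuous_on_def by blast
  have dominated: "norm (x L t * w t) \<le> C * w t" if "t \<in> S" for L t
    using C[OF that, of L] w_nonneg[OF that] by (simp add: abs_mult mult_right_mono)
  have dominant: "(\<lambda>t. C * w t) integrable_on S"
    using integrable_on_cmult_left[OF w(1), of C] by simp
  have integrable: "(\<lambda>t. x L t * w t) integrable_on S" for L
    using continuous_imp_measurable_on_sets_lebesgue[OF cont S] w(2) dominated
    by (intro measurable_bounded_by_integrable_imp_integrable[OF _ dominant _ S]) auto
  have limit: "(\<lambda>L. x L t * w t) \<longlonglongrightarrow> lim (\<lambda>L. x L t) * w t" if "t \<in> S" for t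
    using conv[OF that] by (intro tendsto_mult_right) (simp add: convergent_LIMSEQ_iff)
  show "(\<lambda>t. lim (\<lambda>L. x L t) * w t) integrable_on S"
    and "(\<lambda>L. integral S (\<lambda>t. x L t * w t)) \<longlonglongrightarrow> integral S (\<lambda>t. lim (\<lambda>L. x L t) * w t)"
    using dominated_convergence[OF integrable dominant dominated limit] by simp_all
qed

theorem lemmaA1:
  fixes d :: nat and J :: "nat \<Rightarrow> real" and k1 c \<rho> :: real
  assumes d: "d \<ge> 1"
    and inf: "infinite {q. J q \<noteq> 0}"
    and summ: "summable (\<lambda>q. \<bar>J (Suc q)\<bar> / fact q)"
    and norm: "kappa J 1 = 1"
    and deriv1: "(kappa J has_real_derivative k1) (at 1 within {-1..1})"
    and k1le: "k1 \<le> 1"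
    and crit: "k1 = 1 \<Longrightarrow> c \<noteq> 0 \<and> \<rho> > 1 \<and>
       (\<lambda>t. (1 - kappa J t) - (k1 * (1 - t) - c * (1 - t) powr \<rho>))
         \<in> o[at_left 1](\<lambda>t. (1 - t) powr \<rho>)"
  defines "v \<equiv> (\<lambda>L::nat. if k1 < 1 then inverse (k1 ^ L) else real L powr (1 / (\<rho> - 1)))"
    and "g \<equiv> (\<lambda>t. lim (\<lambda>L::nat. (if k1 < 1 then inverse (k1 ^ L) else real L powr (1 / (\<rho> - 1))) * (1 - (kappa J ^^ L) t)))"
  shows "(\<lambda>t. g t * wgt d t) integrable_on {-1..1} \<and>
    (\<lambda>L. integral {-1..1} (\<lambda>t. v L * (1 - (kappa J ^^ L) t) * wgt d t) / integral {-1..1} (wgt d))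
      \<longlonglongrightarrow> integral {-1..1} (\<lambda>t. g t * wgt d t) / integral {-1..1} (wgt d)"
proof -
  have "\<And>q. 0 \<le> (J q)\<^sup>2 / fact q" "\<And>t. kappa J t = (\<Sum>q. (J q)\<^sup>2 / fact q * t ^ q)"
    by (simp_all add: kappa_def)
  from bounded_convergent_continuous_on_rescaled_iterates[OF this norm deriv1 k1le crit]
  have "bounded_convergent_continuous_on {-1..1} (\<lambda>L t. v L * (1 - (kappa J ^^ L) t))"
    unfolding v_def by simp
  from integral_tendsto_if_bounded_convergent_continuous[OF _ wgt_integrable[OF d] wgt_measurable
      wgt_nonneg this]
  have integrable: "(\<lambda>t. g t * wgt d t) integrable_on {-1..1}"
    and limit: "(\<lambda>L. integral {-1..1} (\<lambda>t. v L * (1 - (kappa J ^^ L) t) * wgt d t))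
      \<longlonglongrightarrow> integral {-1..1} (\<lambda>t. g t * wgt d t)"
    unfolding g_def v_def by simp_all
  show ?thesis
    using integrable tendsto_mult_right[OF limit, of "inverse (integral {-1..1} (wgt d))"]
    by (simp add: divide_inverse)
qed

end
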